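(* Let $h\in\mathcal H$, $d=\operatorname{hdepth}(h)$, $k_0=k_0(h)$ and $h_0=h(k_0)$. Then for every integer $k$ with $k_0\le k\le d$ we have $h(k)\ge \binom{d-k_0}{k-k_0}h_0$.
   Context: $\mathcal H$ denotes the set of nonzero functions $h:\mathbb Z\to\mathbb Z_{\ge 0}$ such that $h(j)=0$ for all sufficiently negative $j$. For $h\in\mathcal H$ and integers $k\le d$, set $\beta_k^d(h)=\sum_{j\le k}(-1)^{k-j}\binom{d-j}{k-j}h(j)$, and $\operatorname{hdepth}(h)=\max\{d\in\mathbb Z:\ \beta_k^d(h)\ge 0\text{ for all integers }k\le d\}$. Also $k_0(h)=\min\{j: h(j)>0\}$. *)

theory Defs
  imports Main
begin

definition in_H :: "(int \<Rightarrow> nat) \<Rightarrow> bool" where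
  "in_H h \<longleftrightarrow> h \<noteq> (\<lambda>_. 0) \<and> (\<exists>N. \<forall>j. j < N \<longrightarrow> h j = 0)"

text \<open>beta_k^d(h) = sum_{j<=k} (-1)^(k-j) binom(d-j, k-j) h(j), for k <= d.
  Only finitely many nonzero terms occur for h in H; we sum over the (finite) support below k.\<close>
definition beta :: "(int \<Rightarrow> nat) \<Rightarrow> int \<Rightarrow> int \<Rightarrow> int" where
  "beta h k d = (\<Sum>j\<in>{j. j \<le> k \<and> h j \<noteq> 0}.
      (-1) ^ nat (k - j) * int (nat (d - j) choose nat (k - j)) * int (h j))"

definition hdepth :: "(int \<Rightarrow> nat) \<Rightarrow> int" where
  "hdepth h = (GREATEST d. \<forall>k. k \<le> d \<longrightarrow> beta h k d \<ge> 0)"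

definition k0 :: "(int \<Rightarrow> nat) \<Rightarrow> int" where
  "k0 h = (LEAST j. h j > 0)"

end

theory Submission imports Defs begin

text \<open>Put \<open>K = k\<^sub>0(h)\<close> and \<open>D = d - K\<close>. Only \<open>j \<ge> K\<close> contribute to \<open>\<beta>\<^sub>k\<^sup>d(h)\<close>, so
  \<open>b\<^sub>n = \<beta>\<^bsub>K+n\<^esub>\<^sup>d(h)\<close> is obtained from \<open>a\<^sub>n = h(K+n)\<close> by
  \<open>b\<^sub>n = \<Sum>\<^sub>l (-1)\<^sup>n\<^sup>-\<^sup>l C(D-l, n-l) a\<^sub>l\<close>. This transform is inverted by
  \<open>a\<^sub>m = \<Sum>\<^sub>n C(D-n, m-n) b\<^sub>n\<close>, a consequence of \<open>C(D-l,m-l) C(m-l,n-l) = C(D-l,n-l) C(D-n,m-n)\<close>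
  and the vanishing of alternating binomial sums. For \<open>d = hdepth h\<close> all \<open>b\<^sub>n\<close> are nonnegative,
  hence \<open>a\<^sub>m \<ge> C(D,m) b\<^sub>0 = C(D,m) h(K)\<close>. The depth is finite because
  \<open>\<beta>\<^bsub>K+1\<^esub>\<^sup>d(h) = h(K+1) - (d-K) h(K)\<close> becomes negative for large \<open>d\<close>.\<close>

lemma sum_atMost_triangle_swap:
  fixes f :: "nat \<Rightarrow> nat \<Rightarrow> 'a::comm_monoid_add"
  shows   "(\<Sum>n\<le>m. \<Sum>l\<le>n. f n l) = (\<Sum>l\<le>m. \<Sum>n=l..m. f n l)"
proof (induction m)
  case (Suc m)
  have "(\<Sum>l\<le>Suc m. \<Sum>n=l..Suc m. f n l)
      = (\<Sum>l\<le>m. (\<Sum>n=l..m. f n l) + f (Suc m) l) + f (Suc m) (Suc m)"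
    unfolding sum.atMost_Suc by (auto simp: atLeastAtMostSuc_conv add.commute intro!: sum.cong)
  then show ?case
    using Suc by (simp add: sum.distrib)
qed simp

lemma sum_alternating_choose_interval:
  assumes "l \<le> m"
  shows "(\<Sum>n=l..m. (-1)^(n-l) * of_nat (m-l choose (n-l))) = (if l = m then 1 else (0::'a::comm_ring_1))"
proof -
  have "(\<Sum>n=l..m. (-1)^(n-l) * of_nat (m-l choose (n-l))) = (\<Sum>i\<le>m-l. (-1)^i * (of_nat (m-l choose i) :: 'a))"
    using assms by (intro sum.reindex_bij_witness[of _ "\<lambda>i. i + l" "\<lambda>n. n - l"]) auto
  then show ?thesis
    using assms choose_alternating_sum[of "m - l", where 'a='a] by auto
qed

definition alt_binomial_transform :: "nat \<Rightarrow> (nat \<Rightarrow> 'a::comm_ring_1) \<Rightarrow> nat \<Rightarrow> 'a" where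
  "alt_binomial_transform D a n = (\<Sum>l\<le>n. (-1)^(n-l) * of_nat (D-l choose (n-l)) * a l)"

lemma alt_binomial_transform_inverse:
  assumes "m \<le> D"
  shows "(\<Sum>n\<le>m. of_nat (D-n choose (m-n)) * alt_binomial_transform D a n) = a m"
proof -
  have inner: "(\<Sum>n=l..m. of_nat (D-n choose (m-n)) * ((-1)^(n-l) * of_nat (D-l choose (n-l)) * a l))
      = (if l = m then a m else 0)" if "l \<le> m" for l
  proof -
    have "(\<Sum>n=l..m. of_nat (D-n choose (m-n)) * ((-1)^(n-l) * of_nat (D-l choose (n-l)) * a l))
        = of_nat (D-l choose (m-l)) * a l * (\<Sum>n=l..m. (-1)^(n-l) * of_nat (m-l choose (n-l)))"
      unfolding sum_distrib_left
    proof (rule sum.cong[OF refl])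
      fix n assume n: "n \<in> {l..m}"
      have "(D-l choose (m-l)) * (m-l choose (n-l)) = (D-l choose (n-l)) * (D-n choose (m-n))"
        using choose_mult[of "n-l" "m-l" "D-l"] n assms by force
      then have "of_nat (D-l choose (m-l)) * of_nat (m-l choose (n-l))
          = (of_nat (D-l choose (n-l)) * of_nat (D-n choose (m-n)) :: 'a)"
        by (metis of_nat_mult)
      then show "of_nat (D-n choose (m-n)) * ((-1)^(n-l) * of_nat (D-l choose (n-l)) * a l)
          = of_nat (D-l choose (m-l)) * a l * ((-1)^(n-l) * of_nat (m-l choose (n-l)))"
        by (simp add: algebra_simps)
    qed
    then show ?thesis
      using sum_alternating_choose_interval[OF that, where 'a='a] by simp
  qed
  have "(\<Sum>n\<le>m. of_nat (D-n choose (m-n)) * alt_binomial_transform D a n)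
      = (\<Sum>n\<le>m. \<Sum>l\<le>n. of_nat (D-n choose (m-n)) * ((-1)^(n-l) * of_nat (D-l choose (n-l)) * a l))"
    by (simp add: alt_binomial_transform_def sum_distrib_left)
  also have "\<dots> = (\<Sum>l\<le>m. if l = m then a m else 0)"
    by (simp add: sum_atMost_triangle_swap inner)
  also have "\<dots> = a m"
    by simp
  finally show ?thesis .
qed

lemma alt_binomial_transform_nonneg_imp_ge:
  fixes a :: "nat \<Rightarrow> 'a::linordered_idom"
  assumes "m \<le> D" and "\<And>n. n \<le> m \<Longrightarrow> 0 \<le> alt_binomial_transform D a n"
  shows "of_nat (D choose m) * a 0 \<le> a m"
proof -
  let ?t = "\<lambda>n. of_nat (D-n choose (m-n)) * alt_binomial_transform D a n"
  have t_nonneg: "?t n \<ge> 0" if "n \<le> m" for n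
    using assms(2)[OF that] by simp
  have "of_nat (D choose m) * a 0 = ?t 0"
    by (simp add: alt_binomial_transform_def)
  also have "\<dots> \<le> sum ?t {..m}"
    using t_nonneg by (intro member_le_sum) auto
  also have "\<dots> = a m"
    using alt_binomial_transform_inverse[OF assms(1)] .
  finally show ?thesis .
qed

lemma int_bounded_below_has_least:
  fixes P :: "int \<Rightarrow> bool"
  assumes "P x" and "\<And>y. P y \<Longrightarrow> b \<le> y"
  shows "\<exists>m. P m \<and> (\<forall>y. P y \<longrightarrow> m \<le> y)"
proof -
  define S where "S = {y. P y \<and> y \<le> x}"
  have "S \<subseteq> {b..x}"
    using assms(2) unfolding S_def by auto
  then have "finite S"
    using finite_subset by blast
  moreover have "x \<in> S"
    using assms(1) unfolding S_def by simp
  ultimately have "Min S \<in> S" and Min_le_S: "\<And>y. y \<in> S \<Longrightarrow> Min S \<le> y"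
    using Min_in Min_le by blast+
  have "Min S \<le> y" if "P y" for y
  proof (cases "y \<le> x")
    case True
    then show ?thesis using Min_le_S that unfolding S_def by blast
  next
    case False
    then show ?thesis using \<open>Min S \<in> S\<close> unfolding S_def by simp
  qed
  with \<open>Min S \<in> S\<close> show ?thesis
    unfolding S_def by blast
qed

lemma int_bounded_above_has_greatest:
  fixes P :: "int \<Rightarrow> bool"
  assumes "P x" and "\<And>y. P y \<Longrightarrow> y \<le> b"
  shows "\<exists>m. P m \<and> (\<forall>y. P y \<longrightarrow> y \<le> m)"
proof -
  have "\<exists>m. P (- m) \<and> (\<forall>y. P (- y) \<longrightarrow> m \<le> y)"
    using assms by (intro int_bounded_below_has_least[of "\<lambda>y. P (- y)" "- x" "- b"]) (auto simp: minus_le_iff)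
  then obtain m where "P (- m)" and "\<forall>y. P (- y) \<longrightarrow> m \<le> y"
    by blast
  then show ?thesis
    by (metis minus_le_iff minus_minus)
qed

lemma k0_in_H:
  assumes "in_H h"
  shows "0 < h (k0 h)" and "0 < h j \<Longrightarrow> k0 h \<le> j"
proof -
  obtain N j0 where N: "\<And>j. j < N \<Longrightarrow> h j = 0" and j0: "0 < h j0"
    using assms unfolding in_H_def by fastforce
  have "N \<le> y" if "0 < h y" for y
    using N[of y] that by force
  then obtain m where m: "0 < h m" "\<forall>y. 0 < h y \<longrightarrow> m \<le> y"
    using int_bounded_below_has_least[of "\<lambda>y. 0 < h y", OF j0] by blast
  then have "k0 h = m"
    unfolding k0_def by (intro Least_equality) auto
  then show "0 < h (k0 h)" and "0 < h j \<Longrightarrow> k0 h \<le> j"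
    using m by auto
qed

lemma beta_below_k0:
  assumes "in_H h" and "k < k0 h"
  shows "beta h k d = 0"
proof -
  have "{j. j \<le> k \<and> h j \<noteq> 0} = {}"
    using k0_in_H(2)[OF assms(1)] assms(2) by force
  then show ?thesis
    unfolding beta_def by simp
qed

lemma beta_from_k0:
  assumes "in_H h" and "k0 h + int m \<le> d"
  shows "beta h (k0 h + int m) d
    = alt_binomial_transform (nat (d - k0 h)) (\<lambda>n. int (h (k0 h + int n))) m"
proof -
  define K where "K = k0 h"
  define g where "g j = (-1::int) ^ nat (K + int m - j) * int (nat (d - j) choose nat (K + int m - j)) * int (h j)"
    for j
  have support: "{j. j \<le> K + int m \<and> h j \<noteq> 0} \<subseteq> {K..K + int m}"
    using k0_in_H(2)[OF assms(1)] unfolding K_def by fastforce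
  have "beta h (K + int m) d = sum g {j. j \<le> K + int m \<and> h j \<noteq> 0}"
    unfolding beta_def g_def ..
  also have "\<dots> = sum g {K..K + int m}"
    by (rule sum.mono_neutral_left) (use support in \<open>auto simp: g_def\<close>)
  also have "\<dots> = (\<Sum>n\<le>m. g (K + int n))"
    by (rule sum.reindex_bij_witness[of _ "\<lambda>n. K + int n" "\<lambda>j. nat (j - K)"]) auto
  also have "\<dots> = alt_binomial_transform (nat (d - K)) (\<lambda>n. int (h (K + int n))) m"
    unfolding alt_binomial_transform_def
  proof (rule sum.cong[OF refl])
    fix n assume "n \<in> {..m}"
    then have "nat (K + int m - (K + int n)) = m - n" and "nat (d - (K + int n)) = nat (d - K) - n"
      using assms(2) unfolding K_def by auto
    then show "g (K + int n) = (-1)^(m-n) * int (nat (d - K) - n choose (m-n)) * int (h (K + int n))"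
      unfolding g_def by simp
  qed
  finally show ?thesis
    unfolding K_def .
qed

lemma beta_nonneg_at_k0:
  assumes "in_H h" and "k \<le> k0 h"
  shows "0 \<le> beta h k (k0 h)"
proof (cases "k < k0 h")
  case False
  then have "k = k0 h + int 0"
    using assms(2) by simp
  then show ?thesis
    using beta_from_k0[OF assms(1), of 0] by (simp add: alt_binomial_transform_def)
qed (simp add: beta_below_k0 assms)

lemma beta_nonneg_bounds_depth:
  assumes "in_H h" and "\<forall>k\<le>d. 0 \<le> beta h k d"
  shows "d \<le> k0 h + int (h (k0 h + 1))"
proof (rule ccontr)
  define K where "K = k0 h"
  assume "\<not> ?thesis"
  then have d: "K + int (h (K + 1)) < d"
    unfolding K_def by simp
  have "beta h (K + int 1) d = int (h (K + 1)) - (d - K) * int (h K)"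
    using beta_from_k0[OF assms(1), of 1 d] d
    unfolding K_def by (simp add: alt_binomial_transform_def atMost_Suc algebra_simps)
  moreover have "0 \<le> beta h (K + int 1) d"
    using assms(2) d by simp
  moreover have "d - K \<le> (d - K) * int (h K)"
    using k0_in_H(1)[OF assms(1)] d unfolding K_def by simp
  ultimately show False
    using d by linarith
qed

lemma hdepth_beta_nonneg:
  assumes "in_H h" and "k \<le> hdepth h"
  shows "0 \<le> beta h k (hdepth h)"
proof -
  let ?P = "\<lambda>d. \<forall>k\<le>d. 0 \<le> beta h k d"
  obtain m where "?P m" and "\<forall>d. ?P d \<longrightarrow> d \<le> m"
    using int_bounded_above_has_greatest[of ?P "k0 h" "k0 h + int (h (k0 h + 1))"]
      beta_nonneg_at_k0[OF assms(1)] beta_nonneg_bounds_depth[OF assms(1)] by blast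
  then have "hdepth h = m"
    unfolding hdepth_def by (intro Greatest_equality) auto
  then show ?thesis
    using \<open>?P m\<close> assms(2) by simp
qed

theorem proposition1p7:
  fixes h :: "int \<Rightarrow> nat" and k :: int
  assumes "in_H h"
    and "k0 h \<le> k" and "k \<le> hdepth h"
  shows "h k \<ge> (nat (hdepth h - k0 h) choose nat (k - k0 h)) * h (k0 h)"
proof -
  define K where "K = k0 h"
  define a where "a n = int (h (K + int n))" for n
  have k: "k = K + int (nat (k - K))"
    using assms(2) unfolding K_def by simp
  have "0 \<le> alt_binomial_transform (nat (hdepth h - K)) a n" if "n \<le> nat (k - K)" for n
  proof -
    have "k0 h + int n \<le> hdepth h"
      using that k assms(3) unfolding K_def by linarith
    from beta_from_k0[OF assms(1) this] hdepth_beta_nonneg[OF assms(1) this]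
    show ?thesis
      unfolding a_def K_def by simp
  qed
  then have "int (nat (hdepth h - K) choose nat (k - K)) * a 0 \<le> a (nat (k - K))"
    using assms(3) k by (intro alt_binomial_transform_nonneg_imp_ge) auto
  then show ?thesis
    unfolding a_def K_def using k[unfolded K_def] by (metis add.right_neutral of_nat_0 of_nat_le_iff of_nat_mult)
qed

end
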